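(* Let $N\ge1$, $\gamma_1,\dots,\gamma_N>0$, and let $G$ be an $N\times N$ complex Hermitian matrix. Set $\Gamma=\mathrm{diag}(\gamma_1,\dots,\gamma_N,\gamma_1,\dots,\gamma_N)$, $$\mathcal{M}_{\mathrm{IME}}=\begin{pmatrix}\mathrm{Im}[G] & \mathrm{Re}[G]\\ -\mathrm{Re}[G] & -\mathrm{Im}[G]^{\mathrm T}\end{pmatrix},\qquad S_{\mathrm{IME}}(\omega)=\sqrt{2\Gamma}\,(\mathrm{i}\omega\mathbb{I}+\Gamma-\mathcal{M}_{\mathrm{IME}})^{-1}\sqrt{2\Gamma}-\mathbb{I},$$ and $L=\frac{1}{\sqrt2}\begin{pmatrix}I & I\\ -\mathrm{i}I & \mathrm{i}I\end{pmatrix}$, where $I$ and $\mathbb{I}$ are the $N\times N$ and $2N\times 2N$ identities. Then $\mathrm{i}\omega\mathbb{I}+\Gamma-\mathcal{M}_{\mathrm{IME}}$ is invertible for all $\omega\in\mathbb{R}$, and there is an $N\times N$ matrix-valued function $U_{\mathrm{IME}}(\omega)$ such that for all $\omega\in\mathbb{R}$ $$L^\dagger S_{\mathrm{IME}}(\omega)L=\begin{pmatrix}U_{\mathrm{IME}}(\omega) & 0\\ 0 & U_{\mathrm{IME}}(-\omega)^*\end{pmatrix},$$ and $U_{\mathrm{IME}}(\omega)$ is unitary for every $\omega\in\mathbb{R}$.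
   Context: $\mathrm{Re}$, $\mathrm{Im}$ are entrywise; ${}^*$ denotes entrywise complex conjugation and ${}^\dagger$ conjugate transpose; $\sqrt{2\Gamma}$ is the entrywise square root of the diagonal matrix $2\Gamma$. *)

theory Defs
  imports "HOL-Analysis.Analysis"
begin

text \<open>Complex matrices with type-indexed dimensions: an N x N matrix is
  complex^'n^'n, a 2N x 2N matrix is complex^('n+'n)^('n+'n), where the
  index Inl k stands for k and Inr k for N+k.\<close>

definition cconj :: "complex^'m^'n \<Rightarrow> complex^'m^'n" where
  "cconj A = (\<chi> i j. cnj (A$i$j))"

definition cadjoint :: "complex^'m^'n \<Rightarrow> complex^'n^'m" where
  "cadjoint A = (\<chi> i j. cnj (A$j$i))"

definition hermitian :: "complex^'n^'n \<Rightarrow> bool" where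
  "hermitian A \<longleftrightarrow> cadjoint A = A"

definition unitary :: "complex^'n^'n \<Rightarrow> bool" where
  "unitary U \<longleftrightarrow> cadjoint U ** U = mat 1 \<and> U ** cadjoint U = mat 1"

definition re_part :: "complex^'m^'n \<Rightarrow> complex^'m^'n" where
  "re_part A = (\<chi> i j. complex_of_real (Re (A$i$j)))"

definition im_part :: "complex^'m^'n \<Rightarrow> complex^'m^'n" where
  "im_part A = (\<chi> i j. complex_of_real (Im (A$i$j)))"

definition block_mat ::
  "'a^'n^'n \<Rightarrow> 'a^'n^'n \<Rightarrow> 'a^'n^'n \<Rightarrow> 'a^'n^'n \<Rightarrow> 'a^('n+'n)^('n+'n)" where
  "block_mat A B C D = (\<chi> i j. case (i, j) of
      (Inl k, Inl l) \<Rightarrow> A$k$l | (Inl k, Inr l) \<Rightarrow> B$k$l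
    | (Inr k, Inl l) \<Rightarrow> C$k$l | (Inr k, Inr l) \<Rightarrow> D$k$l)"

definition idx_base :: "'n + 'n \<Rightarrow> 'n" where
  "idx_base i = (case i of Inl k \<Rightarrow> k | Inr k \<Rightarrow> k)"

definition Gamma_mat :: "('n::finite \<Rightarrow> real) \<Rightarrow> complex^('n+'n)^('n+'n)" where
  "Gamma_mat \<gamma> = (\<chi> i j. if i = j then complex_of_real (\<gamma> (idx_base i)) else 0)"

definition sqrt2Gamma :: "('n::finite \<Rightarrow> real) \<Rightarrow> complex^('n+'n)^('n+'n)" where
  "sqrt2Gamma \<gamma> = (\<chi> i j. if i = j then complex_of_real (sqrt (2 * \<gamma> (idx_base i))) else 0)"

definition M_IME :: "complex^'n::finite^'n \<Rightarrow> complex^('n+'n)^('n+'n)" where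
  "M_IME G = block_mat (im_part G) (re_part G) (- re_part G) (- transpose (im_part G))"

definition S_IME :: "('n::finite \<Rightarrow> real) \<Rightarrow> complex^'n^'n \<Rightarrow> real \<Rightarrow> complex^('n+'n)^('n+'n)" where
  "S_IME \<gamma> G \<omega> = sqrt2Gamma \<gamma>
      ** matrix_inv (mat (\<i> * complex_of_real \<omega>) + Gamma_mat \<gamma> - M_IME G)
      ** sqrt2Gamma \<gamma> - mat 1"

definition L_mat :: "complex^('n::finite+'n)^('n+'n)" where
  "L_mat = (let s = 1 / complex_of_real (sqrt 2) in
     block_mat (mat s) (mat s) (mat (- \<i> * s)) (mat (\<i> * s)))"

end

theory Submission
  imports Defs
begin

text \<open>Conjugation by the unitary \<open>L\<close> turns the system matrix
  \<open>X(\<omega>) = i\<omega> + \<Gamma> - M\<close> into the block diagonal matrix with blocks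
  \<open>K(\<omega>) = i\<omega> + \<gamma> + iG\<close> and \<open>K(-\<omega>)\<^sup>*\<close>, and \<open>L\<close> commutes with \<open>\<surd>(2\<Gamma>)\<close>.
  Since \<open>G\<close> is Hermitian, \<open>K + K\<^sup>\<dagger> = 2\<gamma>\<close> is positive definite, so \<open>K\<close> is
  invertible, and with \<open>w = \<surd>(2\<gamma>)\<close> the identity \<open>w\<^sup>2 = K + K\<^sup>\<dagger>\<close> makes the
  Cayley-type transform \<open>U = w K\<^sup>-\<^sup>1 w - 1\<close> unitary.\<close>

lemma matrix_add_rdistrib: "((A::'a::semiring_1^'n^'m) + B) ** C = A ** C + B ** C"
  by (simp add: matrix_matrix_mult_def vec_eq_iff sum.distrib distrib_right)

lemma matrix_diff_ldistrib: "(A::'a::ring_1^'n^'m) ** (B - C) = A ** B - A ** C"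
  by (simp add: matrix_matrix_mult_def vec_eq_iff sum_subtractf right_diff_distrib)

lemma matrix_diff_rdistrib: "((A::'a::ring_1^'n^'m) - B) ** C = A ** C - B ** C"
  by (simp add: matrix_matrix_mult_def vec_eq_iff sum_subtractf left_diff_distrib)

lemma
  fixes A :: "'a::semiring_1^'n^'m"
  assumes "invertible A"
  shows matrix_inv_right: "A ** matrix_inv A = mat 1"
    and matrix_inv_left: "matrix_inv A ** A = mat 1"
  using someI_ex[OF assms[unfolded invertible_def]] by (simp_all add: matrix_inv_def)

lemma matrix_inv_eqI:
  fixes A B :: "'a::field^'n^'n"
  assumes "A ** B = mat 1"
  shows "matrix_inv A = B"
proof -
  have "invertible A"
    using assms invertible_right_inverse by blast
  have "matrix_inv A = matrix_inv A ** (A ** B)"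
    by (simp add: assms)
  also have "\<dots> = B"
    by (simp add: matrix_mul_assoc matrix_inv_left[OF \<open>invertible A\<close>])
  finally show ?thesis .
qed

lemma invertible_similar:
  fixes X L L' B :: "'a::field^'n^'n"
  assumes "L' ** L = mat 1" "L ** L' = mat 1" "X ** L = L ** B" "invertible B"
  shows "invertible X" "L' ** matrix_inv X ** L = matrix_inv B"
proof -
  have "X ** (L ** matrix_inv B ** L') = L ** (B ** matrix_inv B) ** L'"
    by (simp add: assms(3) matrix_mul_assoc)
  also have "\<dots> = mat 1"
    by (simp add: matrix_inv_right[OF assms(4)] assms(2))
  finally have X_inv: "X ** (L ** matrix_inv B ** L') = mat 1" .
  then show "invertible X"
    using invertible_right_inverse by blast
  have "L' ** matrix_inv X ** L = (L' ** L) ** matrix_inv B ** (L' ** L)"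
    by (simp add: matrix_inv_eqI[OF X_inv] matrix_mul_assoc)
  then show "L' ** matrix_inv X ** L = matrix_inv B"
    by (simp add: assms(1))
qed

definition diag_mat :: "('n \<Rightarrow> 'a::zero) \<Rightarrow> 'a^'n^'n" where
  "diag_mat d = (\<chi> i j. if i = j then d i else 0)"

lemma mat_eq_diag_mat: "mat c = diag_mat (\<lambda>_. c)"
  by (simp add: mat_def diag_mat_def)

lemma matrix_mult_diag_mat: "(A::'a::semiring_1^'n::finite^'m) ** diag_mat d = (\<chi> i j. A$i$j * d j)"
  by (simp add: matrix_matrix_mult_def diag_mat_def vec_eq_iff if_distrib if_distribR sum.delta'
      cong: if_cong)

lemma diag_mat_mult_matrix: "diag_mat d ** (A::'a::semiring_1^'m^'n::finite) = (\<chi> i j. d i * A$i$j)"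
  by (simp add: matrix_matrix_mult_def diag_mat_def vec_eq_iff if_distrib if_distribR sum.delta
      cong: if_cong)

lemma diag_mat_mult: "diag_mat d ** diag_mat e = diag_mat (\<lambda>i. d i * e i :: 'a::semiring_1)"
  by (simp add: matrix_mult_diag_mat) (simp add: diag_mat_def vec_eq_iff)

lemma cadjoint_diag_mat: "cadjoint (diag_mat d) = diag_mat (\<lambda>i. cnj (d i))"
  by (simp add: cadjoint_def diag_mat_def vec_eq_iff)

lemma cconj_diag_mat: "cconj (diag_mat d) = diag_mat (\<lambda>i. cnj (d i))"
  by (simp add: cconj_def diag_mat_def vec_eq_iff)

lemma matrix_mult_mat: "(A::'a::semiring_1^'n::finite^'m) ** mat c = (\<chi> i j. A$i$j * c)"
  by (simp add: mat_eq_diag_mat matrix_mult_diag_mat)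

lemma mat_mult_matrix: "mat c ** (A::'a::semiring_1^'m^'n::finite) = (\<chi> i j. c * A$i$j)"
  by (simp add: mat_eq_diag_mat diag_mat_mult_matrix)

lemma mat_mult_commute: "mat c ** (A::'a::comm_semiring_1^'n::finite^'n) = A ** mat c"
  by (simp add: matrix_mult_mat mat_mult_matrix mult.commute)

lemma mat_mult_mat: "mat a ** (mat b :: 'a::semiring_1^'n::finite^'n) = mat (a * b)"
  by (simp add: mat_eq_diag_mat diag_mat_mult)

lemma mat_add_mat: "mat a + (mat b :: 'a::monoid_add^'n^'n) = mat (a + b)"
  by (simp add: mat_def vec_eq_iff)

lemma cadjoint_mult: "cadjoint ((A::complex^'n::finite^'m) ** B) = cadjoint B ** cadjoint A"
  by (simp add: cadjoint_def matrix_matrix_mult_def vec_eq_iff mult.commute)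

lemma cadjoint_diff: "cadjoint (A - B) = cadjoint A - cadjoint B"
  by (simp add: cadjoint_def vec_eq_iff)

lemma cadjoint_zero [simp]: "cadjoint 0 = 0"
  by (simp add: cadjoint_def vec_eq_iff)

lemma cadjoint_mat: "cadjoint (mat c :: complex^'n^'n) = mat (cnj c)"
  by (simp add: cadjoint_def vec_eq_iff mat_def)

lemma cconj_mult: "cconj ((A::complex^'n::finite^'m) ** B) = cconj A ** cconj B"
  by (simp add: cconj_def matrix_matrix_mult_def vec_eq_iff)

lemma cconj_diff: "cconj (A - B) = cconj A - cconj B"
  by (simp add: cconj_def vec_eq_iff)

lemma cconj_mat: "cconj (mat c :: complex^'n^'n) = mat (cnj c)"
  by (simp add: cconj_def vec_eq_iff mat_def)

lemma cconj_matrix_inv: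
  fixes A :: "complex^'n::finite^'n"
  assumes "invertible A"
  shows "invertible (cconj A)" "matrix_inv (cconj A) = cconj (matrix_inv A)"
proof -
  have "cconj A ** cconj (matrix_inv A) = mat 1"
    by (simp flip: cconj_mult add: matrix_inv_right[OF assms] cconj_mat)
  then show "invertible (cconj A)" "matrix_inv (cconj A) = cconj (matrix_inv A)"
    using invertible_right_inverse matrix_inv_eqI by blast+
qed

lemma hermitian_nth: "hermitian A \<Longrightarrow> A$j$i = cnj (A$i$j)"
  unfolding hermitian_def cadjoint_def vec_eq_iff by (metis vec_lambda_beta)

definition cquad_form :: "complex^'n::finite^'n \<Rightarrow> complex^'n \<Rightarrow> complex" where
  "cquad_form A x = (\<Sum>i\<in>UNIV. cnj (x$i) * (A *v x)$i)"

lemma cquad_form_add: "cquad_form (A + B) x = cquad_form A x + cquad_form B x"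
  by (simp add: cquad_form_def matrix_vector_mult_def sum.distrib distrib_left distrib_right)

lemma cquad_form_cadjoint: "cquad_form (cadjoint A) x = cnj (cquad_form A x)"
  unfolding cquad_form_def matrix_vector_mult_def cadjoint_def
  by (simp add: sum_distrib_left, subst sum.swap, simp add: mult_ac)

lemma cquad_form_diag_mat:
  "cquad_form (diag_mat (\<lambda>i. of_real (d i))) x = of_real (\<Sum>i\<in>UNIV. d i * (cmod (x$i))\<^sup>2)"
proof -
  have "cquad_form (diag_mat (\<lambda>i. of_real (d i))) x
      = (\<Sum>i\<in>UNIV. cnj (x$i) * (of_real (d i) * x$i))"
    by (simp add: cquad_form_def matrix_vector_mult_def diag_mat_def if_distrib if_distribR
        sum.delta cong: if_cong)
  also have "\<dots> = (\<Sum>i\<in>UNIV. of_real (d i * (cmod (x$i))\<^sup>2))"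
    by (rule sum.cong[OF refl])
      (simp add: complex_eq_iff cmod_power2 algebra_simps, simp add: power2_eq_square)
  finally show ?thesis
    by (simp only: of_real_sum)
qed

lemma invertible_if_hermitian_part_pos:
  fixes K :: "complex^'n::finite^'n"
  assumes "K + cadjoint K = diag_mat (\<lambda>i. of_real (d i))" and "\<And>i. d i > 0"
  shows "invertible K"
proof -
  have "x = 0" if "K *v x = 0" for x
  proof -
    have "cquad_form K x = 0"
      using that by (simp add: cquad_form_def)
    then have "cquad_form (K + cadjoint K) x = 0"
      by (simp add: cquad_form_add cquad_form_cadjoint)
    then have "(\<Sum>i\<in>UNIV. d i * (cmod (x$i))\<^sup>2) = 0"
      by (simp only: assms(1) cquad_form_diag_mat of_real_eq_0_iff)
    then have "\<forall>i. d i * (cmod (x$i))\<^sup>2 = 0"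
      using sum_nonneg_eq_0_iff[of UNIV "\<lambda>i. d i * (cmod (x$i))\<^sup>2"] assms(2)
      by (simp add: less_imp_le)
    then show "x = 0"
      using assms(2) by (simp add: vec_eq_iff) (metis less_irrefl)
  qed
  then show ?thesis
    using matrix_left_invertible_ker invertible_left_inverse by blast
qed

lemma unitary_cayley:
  fixes K w :: "complex^'n::finite^'n"
  assumes "invertible K" "cadjoint w = w" "w ** w = K + cadjoint K"
  shows "unitary (w ** matrix_inv K ** w - mat 1)"
proof -
  define P where "P = matrix_inv K"
  define Q where "Q = cadjoint P"
  have KP: "K ** P = mat 1" and PK: "P ** K = mat 1"
    using matrix_inv_right[OF assms(1)] matrix_inv_left[OF assms(1)] by (simp_all add: P_def)
  have QK: "Q ** cadjoint K = mat 1" and KQ: "cadjoint K ** Q = mat 1"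
    using arg_cong[OF KP, of cadjoint] arg_cong[OF PK, of cadjoint]
    by (simp_all add: Q_def cadjoint_mult cadjoint_mat)
  \<comment> \<open>\<open>w\<^sup>2 = K + K\<^sup>\<dagger>\<close> gives \<open>Q w\<^sup>2 P = Q + P\<close>, the only identity \<open>U\<^sup>\<dagger>U = 1\<close> needs\<close>
  have QwwP: "Q ** (w ** w) ** P = Q + P" and PwwQ: "P ** (w ** w) ** Q = P + Q"
    by (simp_all add: assms(3) matrix_add_ldistrib matrix_add_rdistrib matrix_mul_assoc,
        simp_all add: KP PK flip: matrix_mul_assoc add: QK KQ)
  have adj: "cadjoint (w ** P ** w - mat 1) = w ** Q ** w - mat 1"
    by (simp add: cadjoint_diff cadjoint_mult cadjoint_mat assms(2) Q_def matrix_mul_assoc)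
  have "(w ** X ** w - mat 1) ** (w ** Y ** w - mat 1) = mat 1"
    if "X ** (w ** w) ** Y = X + Y" for X Y
  proof -
    have "(w ** X ** w - mat 1) ** (w ** Y ** w - mat 1)
        = w ** (X ** (w ** w) ** Y) ** w - w ** X ** w - w ** Y ** w + mat 1"
      by (simp add: matrix_diff_ldistrib matrix_diff_rdistrib matrix_mul_assoc algebra_simps)
    also have "\<dots> = mat 1"
      by (simp add: that matrix_add_ldistrib matrix_add_rdistrib)
    finally show ?thesis .
  qed
  then show ?thesis
    unfolding unitary_def P_def[symmetric] adj using QwwP PwwQ by blast
qed

lemma sum_UNIV_Plus:
  "sum g (UNIV :: ('a::finite + 'b::finite) set) = (\<Sum>k\<in>UNIV. g (Inl k)) + (\<Sum>k\<in>UNIV. g (Inr k))"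
  by (subst UNIV_Plus_UNIV[symmetric], subst sum.Plus) (auto simp: o_def)

lemma block_mat_nth [simp]:
  "block_mat A B C D $ Inl k $ Inl l = A$k$l"
  "block_mat A B C D $ Inl k $ Inr l = B$k$l"
  "block_mat A B C D $ Inr k $ Inl l = C$k$l"
  "block_mat A B C D $ Inr k $ Inr l = D$k$l"
  by (simp_all add: block_mat_def)

lemma block_mat_eqI:
  fixes X Y :: "'a^('n::finite+'n)^('n+'n)"
  assumes "\<And>k l. X $ Inl k $ Inl l = Y $ Inl k $ Inl l"
    "\<And>k l. X $ Inl k $ Inr l = Y $ Inl k $ Inr l"
    "\<And>k l. X $ Inr k $ Inl l = Y $ Inr k $ Inl l"
    "\<And>k l. X $ Inr k $ Inr l = Y $ Inr k $ Inr l"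
  shows "X = Y"
  unfolding vec_eq_iff by (metis assms sum.exhaust)

lemma block_mat_mult:
  fixes A B C D E F G H :: "'a::semiring_1^'n::finite^'n"
  shows "block_mat A B C D ** block_mat E F G H
    = block_mat (A ** E + B ** G) (A ** F + B ** H) (C ** E + D ** G) (C ** F + D ** H)"
  by (rule block_mat_eqI) (simp_all add: matrix_matrix_mult_def sum_UNIV_Plus)

lemma block_mat_add:
  "block_mat A B C D + block_mat E F G H = block_mat (A + E) (B + F) (C + G) (D + H)"
  by (rule block_mat_eqI) simp_all

lemma block_mat_diff:
  "block_mat A B C D - block_mat E F G H = block_mat (A - E) (B - F) (C - G) (D - H)"
  by (rule block_mat_eqI) simp_all

lemma mat_eq_block_mat: "(mat c :: 'a::zero^('n::finite+'n)^('n+'n)) = block_mat (mat c) 0 0 (mat c)"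
  by (rule block_mat_eqI) (simp_all add: mat_def)

lemma cadjoint_block_mat:
  "cadjoint (block_mat A B C D) = block_mat (cadjoint A) (cadjoint C) (cadjoint B) (cadjoint D)"
  by (rule block_mat_eqI) (simp_all add: cadjoint_def)

lemma invertible_block_diag:
  fixes A D :: "'a::field^'n::finite^'n"
  assumes "invertible A" "invertible D"
  shows "invertible (block_mat A 0 0 D)"
    "matrix_inv (block_mat A 0 0 D) = block_mat (matrix_inv A) 0 0 (matrix_inv D)"
proof -
  have "block_mat A 0 0 D ** block_mat (matrix_inv A) 0 0 (matrix_inv D) = mat 1"
    by (simp add: block_mat_mult matrix_inv_right assms flip: mat_eq_block_mat)
  then show "invertible (block_mat A 0 0 D)"
    "matrix_inv (block_mat A 0 0 D) = block_mat (matrix_inv A) 0 0 (matrix_inv D)"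
    using invertible_right_inverse matrix_inv_eqI by blast+
qed

definition K_IME :: "('n::finite \<Rightarrow> real) \<Rightarrow> complex^'n^'n \<Rightarrow> real \<Rightarrow> complex^'n^'n" where
  "K_IME \<gamma> G \<omega> = (\<chi> i j. (if i = j then \<i> * of_real \<omega> + of_real (\<gamma> i) else 0) + \<i> * G$i$j)"

definition sqrt2gamma :: "('n::finite \<Rightarrow> real) \<Rightarrow> complex^'n^'n" where
  "sqrt2gamma \<gamma> = diag_mat (\<lambda>i. of_real (sqrt (2 * \<gamma> i)))"

definition U_IME :: "('n::finite \<Rightarrow> real) \<Rightarrow> complex^'n^'n \<Rightarrow> real \<Rightarrow> complex^'n^'n" where
  "U_IME \<gamma> G \<omega> = sqrt2gamma \<gamma> ** matrix_inv (K_IME \<gamma> G \<omega>) ** sqrt2gamma \<gamma> - mat 1"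

lemma sqrt2Gamma_eq_block_mat: "sqrt2Gamma \<gamma> = block_mat (sqrt2gamma \<gamma>) 0 0 (sqrt2gamma \<gamma>)"
  by (rule block_mat_eqI) (simp_all add: sqrt2Gamma_def sqrt2gamma_def diag_mat_def idx_base_def)

lemma Gamma_mat_eq_block_mat:
  "Gamma_mat \<gamma> = block_mat (diag_mat (\<lambda>i. of_real (\<gamma> i))) 0 0 (diag_mat (\<lambda>i. of_real (\<gamma> i)))"
  by (rule block_mat_eqI) (simp_all add: Gamma_mat_def diag_mat_def idx_base_def)

lemma cadjoint_sqrt2gamma: "cadjoint (sqrt2gamma \<gamma>) = sqrt2gamma \<gamma>"
  by (simp add: sqrt2gamma_def cadjoint_diag_mat)

lemma cconj_sqrt2gamma: "cconj (sqrt2gamma \<gamma>) = sqrt2gamma \<gamma>"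
  by (simp add: sqrt2gamma_def cconj_diag_mat)

lemma sqrt2gamma_square:
  assumes "\<And>k. \<gamma> k \<ge> 0"
  shows "sqrt2gamma \<gamma> ** sqrt2gamma \<gamma> = diag_mat (\<lambda>i. of_real (2 * \<gamma> i))"
  using assms by (simp add: sqrt2gamma_def diag_mat_mult flip: of_real_mult)

lemma K_IME_hermitian_part:
  assumes "hermitian G"
  shows "K_IME \<gamma> G \<omega> + cadjoint (K_IME \<gamma> G \<omega>) = diag_mat (\<lambda>i. of_real (2 * \<gamma> i))"
  unfolding vec_eq_iff
proof (intro allI)
  fix i j
  show "(K_IME \<gamma> G \<omega> + cadjoint (K_IME \<gamma> G \<omega>)) $ i $ j
      = diag_mat (\<lambda>i. of_real (2 * \<gamma> i)) $ i $ j"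
    using hermitian_nth[OF assms, of j i]
    by (simp add: K_IME_def cadjoint_def diag_mat_def complex_eq_iff)
qed

lemma invertible_K_IME:
  assumes "\<And>k. \<gamma> k > 0" "hermitian G"
  shows "invertible (K_IME \<gamma> G \<omega>)"
  by (rule invertible_if_hermitian_part_pos[OF K_IME_hermitian_part[OF assms(2)]])
    (simp add: assms(1))

lemma unitary_U_IME:
  assumes "\<And>k. \<gamma> k > 0" "hermitian G"
  shows "unitary (U_IME \<gamma> G \<omega>)"
  unfolding U_IME_def
proof (rule unitary_cayley[OF invertible_K_IME[OF assms]])
  show "cadjoint (sqrt2gamma \<gamma>) = sqrt2gamma \<gamma>"
    by (rule cadjoint_sqrt2gamma)
  show "sqrt2gamma \<gamma> ** sqrt2gamma \<gamma> = K_IME \<gamma> G \<omega> + cadjoint (K_IME \<gamma> G \<omega>)"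
    by (simp add: sqrt2gamma_square K_IME_hermitian_part assms less_imp_le)
qed

lemma unitary_L_mat: "unitary L_mat"
proof -
  define s :: complex where "s = 1 / of_real (sqrt 2)"
  have s: "cnj s = s" "s * s = 1 / 2"
    by (simp_all add: s_def flip: of_real_mult)
  have L: "L_mat = block_mat (mat s) (mat s) (mat (- \<i> * s)) (mat (\<i> * s))"
    by (simp add: L_mat_def Let_def s_def)
  show ?thesis
    unfolding unitary_def L cadjoint_block_mat cadjoint_mat block_mat_mult mat_mult_mat mat_add_mat
      mat_eq_block_mat[of 1]
    by (simp add: s algebra_simps)
qed

lemma sqrt2Gamma_L_mat_commute: "sqrt2Gamma \<gamma> ** L_mat = L_mat ** sqrt2Gamma \<gamma>"
  by (simp add: sqrt2Gamma_eq_block_mat L_mat_def Let_def block_mat_mult mat_mult_commute)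

lemma transpose_im_part_hermitian:
  assumes "hermitian G"
  shows "transpose (im_part G) = - im_part G"
  unfolding vec_eq_iff
proof (intro allI)
  fix i j
  show "transpose (im_part G) $ i $ j = (- im_part G) $ i $ j"
    using hermitian_nth[OF assms, of j i] by (simp add: transpose_def im_part_def)
qed

lemma IME_system_L_mat:
  assumes "hermitian G"
  shows "(mat (\<i> * of_real \<omega>) + Gamma_mat \<gamma> - M_IME G) ** L_mat
    = L_mat ** block_mat (K_IME \<gamma> G \<omega>) 0 0 (cconj (K_IME \<gamma> G (- \<omega>)))"
  unfolding M_IME_def transpose_im_part_hermitian[OF assms] Gamma_mat_eq_block_mat L_mat_def Let_def
    mat_eq_block_mat[of "\<i> * of_real \<omega>"] block_mat_add block_mat_diff block_mat_mult
    matrix_mult_mat mat_mult_matrix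
  by (rule block_mat_eqI)
    (simp_all add: K_IME_def cconj_def diag_mat_def mat_def im_part_def re_part_def complex_eq_iff
      algebra_simps)

lemma
  assumes "\<And>k. \<gamma> k > 0" "hermitian G"
  shows invertible_IME_system: "invertible (mat (\<i> * of_real \<omega>) + Gamma_mat \<gamma> - M_IME G)"
    and matrix_inv_IME_system_L_mat:
      "cadjoint L_mat ** matrix_inv (mat (\<i> * of_real \<omega>) + Gamma_mat \<gamma> - M_IME G) ** L_mat
        = block_mat (matrix_inv (K_IME \<gamma> G \<omega>)) 0 0 (cconj (matrix_inv (K_IME \<gamma> G (- \<omega>))))"
proof -
  have K: "invertible (K_IME \<gamma> G \<omega>)" "invertible (cconj (K_IME \<gamma> G (- \<omega>)))"
    using invertible_K_IME[OF assms] by (simp_all add: cconj_matrix_inv(1))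
  have L: "cadjoint L_mat ** L_mat = mat 1" "L_mat ** cadjoint L_mat = mat 1"
    using unitary_L_mat unitary_def by blast+
  note similar = invertible_similar[OF L IME_system_L_mat[OF assms(2)] invertible_block_diag(1)[OF K]]
  show "invertible (mat (\<i> * of_real \<omega>) + Gamma_mat \<gamma> - M_IME G)"
    by (rule similar(1))
  show "cadjoint L_mat ** matrix_inv (mat (\<i> * of_real \<omega>) + Gamma_mat \<gamma> - M_IME G) ** L_mat
      = block_mat (matrix_inv (K_IME \<gamma> G \<omega>)) 0 0 (cconj (matrix_inv (K_IME \<gamma> G (- \<omega>))))"
    by (simp add: similar(2) invertible_block_diag(2)[OF K]
        cconj_matrix_inv(2)[OF invertible_K_IME[OF assms]])
qed

lemma cadjoint_L_mat_S_IME: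
  fixes \<gamma> :: "'n::finite \<Rightarrow> real"
  assumes "\<And>k. \<gamma> k > 0" "hermitian G"
  shows "cadjoint L_mat ** S_IME \<gamma> G \<omega> ** L_mat
    = block_mat (U_IME \<gamma> G \<omega>) 0 0 (cconj (U_IME \<gamma> G (- \<omega>)))"
proof -
  let ?L = "L_mat :: complex^('n+'n)^('n+'n)" and ?W = "sqrt2Gamma \<gamma>"
    and ?Xi = "matrix_inv (mat (\<i> * of_real \<omega>) + Gamma_mat \<gamma> - M_IME G)"
  have LL: "cadjoint ?L ** ?L = mat 1"
    using unitary_L_mat unitary_def by blast
  have LW: "cadjoint ?L ** ?W = ?W ** cadjoint ?L"
    using arg_cong[OF sqrt2Gamma_L_mat_commute, of cadjoint]
    by (simp add: cadjoint_mult sqrt2Gamma_eq_block_mat cadjoint_block_mat cadjoint_sqrt2gamma)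
  have "cadjoint ?L ** (?W ** ?Xi ** ?W) ** ?L = (cadjoint ?L ** ?W) ** ?Xi ** (?W ** ?L)"
    by (simp add: matrix_mul_assoc)
  also have "\<dots> = ?W ** (cadjoint ?L ** ?Xi ** ?L) ** ?W"
    by (simp add: LW sqrt2Gamma_L_mat_commute matrix_mul_assoc)
  finally have "cadjoint ?L ** S_IME \<gamma> G \<omega> ** ?L = ?W ** (cadjoint ?L ** ?Xi ** ?L) ** ?W - mat 1"
    by (simp add: S_IME_def matrix_diff_ldistrib matrix_diff_rdistrib LL)
  also have "\<dots> = block_mat (U_IME \<gamma> G \<omega>) 0 0 (cconj (U_IME \<gamma> G (- \<omega>)))"
    by (simp add: matrix_inv_IME_system_L_mat assms sqrt2Gamma_eq_block_mat block_mat_mult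
        mat_eq_block_mat[of 1] block_mat_diff U_IME_def cconj_diff cconj_mult cconj_mat
        cconj_sqrt2gamma)
  finally show ?thesis .
qed

theorem mainTheorem4:
  fixes \<gamma> :: "'n::finite \<Rightarrow> real" and G :: "complex^'n^'n"
  assumes "\<And>k. \<gamma> k > 0"
    and "hermitian G"
  shows "(\<forall>\<omega>::real. invertible (mat (\<i> * complex_of_real \<omega>) + Gamma_mat \<gamma> - M_IME G))
    \<and> (\<exists>U :: real \<Rightarrow> complex^'n^'n.
          \<forall>\<omega>::real. cadjoint L_mat ** S_IME \<gamma> G \<omega> ** L_mat
                        = block_mat (U \<omega>) 0 0 (cconj (U (- \<omega>)))
                    \<and> unitary (U \<omega>))"
  by (intro conjI allI exI[where x = "U_IME \<gamma> G"] invertible_IME_system[OF assms]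
      cadjoint_L_mat_S_IME[OF assms] unitary_U_IME[OF assms])

end
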